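(* Let $\Bbbk$ be a field, let $M$ be an $n\times m$ integer matrix of rank $m$, and let $I(M)=\langle x^{\mu_+}-x^{\mu_-}\mid \mu \text{ a column of } M\rangle\subseteq\Bbbk[x_1,\dots,x_n]$. Let $\tau\subseteq\{1,\dots,n\}$ and $P=\mathbb{N}^\tau\times\mathbb{Z}^{\bar\tau}$. Then $u,v\in P$ are connected in $\mathscr{G}_P(\Bbbk[P]\cdot I(M))$ if and only if they are connected in $G_P(M)$.
   Context: For $\mu\in\mathbb{Z}^n$, $(\mu_+)_k=\max(\mu_k,0)$ and $(\mu_-)_k=\max(-\mu_k,0)$. $\bar\tau=\{1,\dots,n\}\setminus\tau$; $P=\mathbb{N}^\tau\times\mathbb{Z}^{\bar\tau}=\{u\in\mathbb{Z}^n\mid u_i\ge 0 \text{ for } i\in\tau\}$, with monoid ring $\Bbbk[P]=\Bbbk[x_j^{\pm1}\mid j\notin\tau][x_i\mid i\in\tau]$. For $Q\subseteq\mathbb{Z}^n$, the graph $G_Q(M)$ has vertex set $Q$, with $u,v$ adjacent iff $u-v$ or $v-u$ is a column of $M$. For a binomial ideal $I\subseteq\Bbbk[P]$, the graph $\mathscr{G}_P(I)$ has vertex set $P$ and an edge between $u,v\in P$ iff $x^u-\rho x^v\in I$ for some nonzero $\rho\in\Bbbk$. *)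

theory Defs
  imports "HOL-Analysis.Analysis" "HOL-Library.Poly_Mapping"
begin

text \<open>Elements of k[Z^n] are finitely supported maps (poly_mapping) with the
 convolution product of Poly_Mapping; x^u is  Poly_Mapping.single u 1.\<close>

definition pos_part :: "int^'n \<Rightarrow> int^'n" where
  "pos_part \<mu> = (\<chi> i. max (\<mu> $ i) 0)"

definition neg_part :: "int^'n \<Rightarrow> int^'n" where
  "neg_part \<mu> = (\<chi> i. max (- (\<mu> $ i)) 0)"

text \<open>P = N^tau x Z^(complement of tau)\<close>
definition Pset :: "'n set \<Rightarrow> (int^'n) set" where
  "Pset \<tau> = {u. \<forall>i\<in>\<tau>. 0 \<le> u $ i}"

text \<open>The monoid ring k[P] as a subset of k[Z^n]\<close>
definition kP :: "'n set \<Rightarrow> ((int^'n) \<Rightarrow>\<^sub>0 'k::field) set" where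
  "kP \<tau> = {f. Poly_Mapping.keys f \<subseteq> Pset \<tau>}"

definition monom :: "int^'n \<Rightarrow> 'k::field \<Rightarrow> (int^'n) \<Rightarrow>\<^sub>0 'k" where
  "monom u c = Poly_Mapping.single u c"

definition binom_gen :: "int^'n \<Rightarrow> (int^'n) \<Rightarrow>\<^sub>0 'k::field" where
  "binom_gen \<mu> = monom (pos_part \<mu>) 1 - monom (neg_part \<mu>) 1"

text \<open>The ideal k[P] . I(M) of k[P], generated by the binomials of the columns of M
 (M has n rows indexed by 'n and m columns indexed by 'm).\<close>
definition extended_ideal :: "'n set \<Rightarrow> int^'m^'n \<Rightarrow> ((int^'n) \<Rightarrow>\<^sub>0 'k::field) set" where
  "extended_ideal \<tau> M =
     {f. \<exists>g. (\<forall>j. g j \<in> kP \<tau>) \<and> f = (\<Sum>j\<in>UNIV. g j * binom_gen (column j M))}"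

definition binom_graph_edge :: "'n set \<Rightarrow> ((int^'n) \<Rightarrow>\<^sub>0 'k::field) set \<Rightarrow> int^'n \<Rightarrow> int^'n \<Rightarrow> bool" where
  "binom_graph_edge \<tau> I u v \<longleftrightarrow> u \<in> Pset \<tau> \<and> v \<in> Pset \<tau> \<and>
     (\<exists>\<rho>. \<rho> \<noteq> 0 \<and> monom u 1 - monom v \<rho> \<in> I)"

definition lattice_graph_edge :: "'n set \<Rightarrow> int^'m^'n \<Rightarrow> int^'n \<Rightarrow> int^'n \<Rightarrow> bool" where
  "lattice_graph_edge \<tau> M u v \<longleftrightarrow> u \<in> Pset \<tau> \<and> v \<in> Pset \<tau> \<and>
     (\<exists>j. u - v = column j M \<or> v - u = column j M)"

end

theory Submission
  imports Defs
begin

text \<open>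
  A lattice edge between \<open>u\<close> and \<open>v\<close> is realised inside the ideal, since
  \<open>x\<^sup>u - x\<^sup>v = \<plusminus>x\<^sup>w (x\<^sup>\<mu>\<^sub>+ - x\<^sup>\<mu>\<^sub>-)\<close> for the componentwise minimum \<open>w\<close> of \<open>u\<close> and \<open>v\<close>,
  which lies in \<open>P\<close>. Conversely, let \<open>C\<close> be the connected component of \<open>u\<close> in \<open>G\<^sub>P(M)\<close>.
  The linear functional "sum of the coefficients on \<open>C\<close>" vanishes on every
  \<open>x\<^sup>w (x\<^sup>\<mu>\<^sub>+ - x\<^sup>\<mu>\<^sub>-)\<close> with \<open>w \<in> P\<close>, because the two exponents are adjacent, hence on the
  whole ideal; evaluated on \<open>x\<^sup>u - \<rho> x\<^sup>v\<close> this forces \<open>v \<in> C\<close>.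
\<close>

lemma poly_mapping_sum_single:
  "(g :: 'a \<Rightarrow>\<^sub>0 'b::comm_monoid_add) =
     (\<Sum>w\<in>Poly_Mapping.keys g. Poly_Mapping.single w (Poly_Mapping.lookup g w))"
  by (rule poly_mapping_eqI) (auto simp: lookup_sum lookup_single when_def in_keys_iff)

definition coeff_sum :: "'a set \<Rightarrow> ('a \<Rightarrow>\<^sub>0 'b::comm_monoid_add) \<Rightarrow> 'b" where
  "coeff_sum C h = (\<Sum>w\<in>C \<inter> Poly_Mapping.keys h. Poly_Mapping.lookup h w)"

lemma coeff_sum_superset:
  assumes "finite S" and "Poly_Mapping.keys h \<subseteq> S"
  shows "coeff_sum C h = (\<Sum>w\<in>C \<inter> S. Poly_Mapping.lookup h w)"
  unfolding coeff_sum_def using assms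
  by (intro sum.mono_neutral_left) (auto simp: in_keys_iff)

lemma coeff_sum_add: "coeff_sum C (a + b) = coeff_sum C a + coeff_sum C b"
proof -
  let ?S = "Poly_Mapping.keys a \<union> Poly_Mapping.keys b"
  have "finite ?S" by simp
  then show ?thesis
    using coeff_sum_superset[of ?S "a + b" C] coeff_sum_superset[of ?S a C]
      coeff_sum_superset[of ?S b C] keys_add[of a b]
    by (simp add: lookup_add sum.distrib)
qed

lemma coeff_sum_diff:
  "coeff_sum C (a - b) = coeff_sum C a - (coeff_sum C b :: 'b::ab_group_add)"
proof -
  have "coeff_sum C (- b) = - coeff_sum C b"
    by (simp add: coeff_sum_def sum_negf)
  then show ?thesis
    by (metis diff_conv_add_uminus coeff_sum_add)
qed

lemma coeff_sum_zero [simp]: "coeff_sum C 0 = 0"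
  by (simp add: coeff_sum_def)

lemma coeff_sum_sum: "coeff_sum C (\<Sum>i\<in>I. f i) = (\<Sum>i\<in>I. coeff_sum C (f i))"
  by (induction I rule: infinite_finite_induct) (simp_all add: coeff_sum_add)

lemma coeff_sum_single: "coeff_sum C (Poly_Mapping.single w c) = (if w \<in> C then c else 0)"
  by (auto simp: coeff_sum_def)

lemma pos_part_minus_neg_part: "pos_part \<mu> - neg_part \<mu> = \<mu>"
  by (simp add: pos_part_def neg_part_def vec_eq_iff max_def)

lemma min_plus_pos_part: "(\<chi> i. min (u $ i) (v $ i)) + pos_part (u - v) = u"
  by (simp add: pos_part_def vec_eq_iff max_def min_def)

lemma min_plus_neg_part: "(\<chi> i. min (u $ i) (v $ i)) + neg_part (u - v) = v"
  by (simp add: neg_part_def vec_eq_iff max_def min_def)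

lemma min_in_Pset: "u \<in> Pset \<tau> \<Longrightarrow> v \<in> Pset \<tau> \<Longrightarrow> (\<chi> i. min (u $ i) (v $ i)) \<in> Pset \<tau>"
  by (simp add: Pset_def)

lemma single_mult_binom_gen:
  "Poly_Mapping.single w c * binom_gen \<mu> =
     Poly_Mapping.single (w + pos_part \<mu>) c - Poly_Mapping.single (w + neg_part \<mu>) (c :: 'k::field)"
  by (simp add: binom_gen_def monom_def right_diff_distrib mult_single)

lemma lattice_graph_edge_shift:
  assumes "w \<in> Pset \<tau>"
  shows "lattice_graph_edge \<tau> M (w + pos_part (column j M)) (w + neg_part (column j M))"
proof -
  have "w + pos_part (column j M) \<in> Pset \<tau>" "w + neg_part (column j M) \<in> Pset \<tau>"
    using assms by (auto simp: Pset_def pos_part_def neg_part_def)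
  moreover have "(w + pos_part (column j M)) - (w + neg_part (column j M)) = column j M"
    using pos_part_minus_neg_part by (metis add_diff_cancel_left)
  ultimately show ?thesis
    unfolding lattice_graph_edge_def by blast
qed

lemma mult_binom_gen_in_extended_ideal:
  assumes "g \<in> kP \<tau>"
  shows "g * binom_gen (column j M) \<in> extended_ideal \<tau> M"
proof -
  let ?g = "\<lambda>j'. if j' = j then g else 0"
  have "(\<Sum>j'\<in>UNIV. ?g j' * binom_gen (column j' M)) = g * binom_gen (column j M)"
  proof -
    have "(\<Sum>j'\<in>UNIV. ?g j' * binom_gen (column j' M)) =
        (\<Sum>j'\<in>UNIV. if j' = j then g * binom_gen (column j' M) else 0)"
      by (rule sum.cong) auto
    then show ?thesis by simp
  qed
  moreover have "\<forall>j'. ?g j' \<in> kP \<tau>"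
    using assms by (simp add: kP_def)
  ultimately show ?thesis
    unfolding extended_ideal_def by (intro CollectI exI[of _ ?g]) simp
qed

lemma coeff_sum_extended_ideal:
  assumes f: "f \<in> extended_ideal \<tau> M"
    and closed: "\<And>a b. lattice_graph_edge \<tau> M a b \<Longrightarrow> a \<in> C \<longleftrightarrow> b \<in> C"
  shows "coeff_sum C f = 0"
proof -
  have generator: "coeff_sum C (g * binom_gen (column j M)) = 0" if "g \<in> kP \<tau>" for g j
  proof -
    have "coeff_sum C (Poly_Mapping.single w (Poly_Mapping.lookup g w) * binom_gen (column j M)) = 0"
      if "w \<in> Poly_Mapping.keys g" for w
    proof -
      have "w \<in> Pset \<tau>" using \<open>g \<in> kP \<tau>\<close> that by (auto simp: kP_def)
      then show ?thesis
        using closed[OF lattice_graph_edge_shift]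
        by (simp add: single_mult_binom_gen coeff_sum_diff coeff_sum_single)
    qed
    moreover have "g * binom_gen (column j M) =
        (\<Sum>w\<in>Poly_Mapping.keys g. Poly_Mapping.single w (Poly_Mapping.lookup g w) * binom_gen (column j M))"
      by (subst poly_mapping_sum_single[of g]) (simp add: sum_distrib_right)
    ultimately show ?thesis
      by (simp add: coeff_sum_sum)
  qed
  from f obtain g where "\<And>j. g j \<in> kP \<tau>"
    and f_eq: "f = (\<Sum>j\<in>UNIV. g j * binom_gen (column j M))"
    unfolding extended_ideal_def by blast
  then show ?thesis
    by (simp add: f_eq coeff_sum_sum generator)
qed

lemma binom_graph_edge_imp_lattice_connected:
  assumes "binom_graph_edge \<tau> (extended_ideal \<tau> M :: ((int^'n) \<Rightarrow>\<^sub>0 'k::field) set) u v"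
  shows "(lattice_graph_edge \<tau> M)\<^sup>*\<^sup>* u v"
proof (rule ccontr)
  assume not_connected: "\<not> (lattice_graph_edge \<tau> M)\<^sup>*\<^sup>* u v"
  define C where "C = {z. (lattice_graph_edge \<tau> M)\<^sup>*\<^sup>* u z}"
  have closed: "a \<in> C \<longleftrightarrow> b \<in> C" if "lattice_graph_edge \<tau> M a b" for a b
  proof -
    have "lattice_graph_edge \<tau> M b a"
      using that unfolding lattice_graph_edge_def by blast
    with that show ?thesis
      unfolding C_def mem_Collect_eq by (blast intro: rtranclp.rtrancl_into_rtrancl)
  qed
  from assms obtain \<rho> :: 'k where "monom u 1 - monom v \<rho> \<in> extended_ideal \<tau> M"
    unfolding binom_graph_edge_def by blast
  then have "coeff_sum C (monom u 1 - monom v \<rho>) = 0"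
    by (rule coeff_sum_extended_ideal) (fact closed)
  moreover have "u \<in> C" "v \<notin> C"
    using not_connected by (auto simp: C_def)
  ultimately show False
    by (simp add: monom_def coeff_sum_diff coeff_sum_single)
qed

lemma lattice_graph_edge_imp_binom_graph_edge:
  assumes "lattice_graph_edge \<tau> M u v"
  shows "binom_graph_edge \<tau> (extended_ideal \<tau> M :: ((int^'n) \<Rightarrow>\<^sub>0 'k::field) set) u v"
proof -
  define w :: "int^'n" where "w = (\<chi> i. min (u $ i) (v $ i))"
  from assms obtain j where uP: "u \<in> Pset \<tau>" and vP: "v \<in> Pset \<tau>"
    and column: "u - v = column j M \<or> v - u = column j M"
    unfolding lattice_graph_edge_def by blast
  have "w \<in> Pset \<tau>"
    using uP vP by (simp add: w_def min_in_Pset)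
  then have in_ideal: "Poly_Mapping.single w c * binom_gen (column j M) \<in> extended_ideal \<tau> M"
    for c :: 'k
    by (intro mult_binom_gen_in_extended_ideal) (simp add: kP_def)
  have "monom u 1 - monom v (1::'k) \<in> extended_ideal \<tau> M"
    using column
  proof
    assume "u - v = column j M"
    then show ?thesis
      using in_ideal[of 1] min_plus_pos_part[of u v] min_plus_neg_part[of u v]
      by (simp add: single_mult_binom_gen monom_def w_def)
  next
    assume "v - u = column j M"
    then show ?thesis
      using in_ideal[of "-1"] min_plus_pos_part[of v u] min_plus_neg_part[of v u]
      by (simp add: single_mult_binom_gen monom_def w_def single_uminus min.commute)
  qed
  then show ?thesis
    unfolding binom_graph_edge_def using uP vP one_neq_zero by blast
qed

theorem lemma2p12:
  fixes M :: "int^'m^'n" and \<tau> :: "'n set" and u v :: "int^'n"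
  assumes "rank (map_matrix real_of_int M) = CARD('m)"
    and "u \<in> Pset \<tau>" and "v \<in> Pset \<tau>"
  shows "(binom_graph_edge \<tau> (extended_ideal \<tau> M :: ((int^'n) \<Rightarrow>\<^sub>0 'k::field) set))\<^sup>*\<^sup>* u v
         \<longleftrightarrow> (lattice_graph_edge \<tau> M)\<^sup>*\<^sup>* u v"
proof -
  let ?B = "binom_graph_edge \<tau> (extended_ideal \<tau> M :: ((int^'n) \<Rightarrow>\<^sub>0 'k) set)"
  let ?L = "lattice_graph_edge \<tau> M"
  have "?B \<le> ?L\<^sup>*\<^sup>*"
    using binom_graph_edge_imp_lattice_connected by blast
  then have "?B\<^sup>*\<^sup>* \<le> ?L\<^sup>*\<^sup>*"
    using rtranclp_mono[of ?B "?L\<^sup>*\<^sup>*"] by simp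
  moreover have "?L \<le> ?B"
    using lattice_graph_edge_imp_binom_graph_edge by blast
  then have "?L\<^sup>*\<^sup>* \<le> ?B\<^sup>*\<^sup>*"
    by (rule rtranclp_mono)
  ultimately have "?B\<^sup>*\<^sup>* = ?L\<^sup>*\<^sup>*"
    by (rule antisym)
  then show ?thesis
    by simp
qed

end
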